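(* Let $\theta\in\mathbb{R}^q$ be constant and let $y=\phi^\top\theta$, with $y$ scalar and $\phi$ an $\mathbb{R}^q$-valued signal, either in continuous time (CT) or in discrete time (DT). Fix $\gamma>0$, a positive gain function $\gamma_g(\cdot)>0$, and initial values $\theta_{g0}\in\mathbb{R}^q$, $\theta_0\in\mathbb{R}^q$. In CT (with $\phi$ bounded and continuous and $\gamma_g$ continuous) define $\dot{\hat\theta}_g=-\gamma_g(t)\phi\phi^\top\hat\theta_g+\gamma_g(t)\phi y$, $\hat\theta_g(0)=\theta_{g0}$; $\dot\Phi=-\gamma_g(t)\phi\phi^\top\Phi$, $\Phi(0)=I_q$; $\dot{\hat\theta}=\gamma\Delta(Y-\Delta\hat\theta)$, $\hat\theta(0)=\theta_0$. In DT (with $\phi$ bounded) define, with $g(k):=1/(\gamma_g(k)+|\phi(k)|^2)$, $\hat\theta_g(k+1)=(I_q-g(k)\phi(k)\phi^\top(k))\hat\theta_g(k)+g(k)\phi(k)y(k)$, $\hat\theta_g(0)=\theta_{g0}$; $\Phi(k+1)=(I_q-g(k)\phi(k)\phi^\top(k))\Phi(k)$, $\Phi(0)=I_q$; $\hat\theta(k+1)=\hat\theta(k)+\frac{\Delta(k)}{\gamma+\Delta^2(k)}(Y(k)-\Delta(k)\hat\theta(k))$, $\hat\theta(0)=\theta_0$. In both cases $\mathcal D:=I_q-\Phi$, $\Delta:=\det\{\mathcal D\}$, $Y:=\mathrm{adj}\{\mathcal D\}(\hat\theta_g-\Phi\theta_{g0})$ (adj denotes the adjugate matrix). If the regression equation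 is identifiable, then $\tilde\theta:=\hat\theta-\theta$ converges to zero exponentially.
   Context: Identifiability: there exist $q$ time instants (positive reals in CT, nonnegative integers in DT) $\tau_1,\dots,\tau_q$ such that $[\phi(\tau_1)|\cdots|\phi(\tau_q)]$ has rank $q$. *)

theory Defs
  imports "HOL-Analysis.Analysis"
begin

definition outer :: "real^'n \<Rightarrow> real^'n \<Rightarrow> real^'n^'n" where
  "outer v w = (\<chi> i j. v $ i * w $ j)"

text \<open>Adjugate (classical adjoint): entry (i,j) is the cofactor C_(j,i),
  i.e. the determinant of A with row j replaced by the i-th unit row vector.\<close>
definition adjugate :: "real^'n^'n \<Rightarrow> real^'n^'n" where
  "adjugate A = (\<chi> i j. det (\<chi> k. if k = j then axis i 1 else A $ k))"

end

theory Submission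
  imports Defs
begin

text \<open>
  Both filters \<open>\<theta>\<^sub>g\<close> and \<open>\<Phi>\<close> are driven by the same time-varying operator, so
  \<open>\<theta>\<^sub>g - \<theta> = \<Phi> (\<theta>\<^sub>g\<^sub>0 - \<theta>)\<close>; hence \<open>Y = adj(I - \<Phi>) (I - \<Phi>) \<theta> = \<Delta> \<theta>\<close>, and the
  estimation error \<open>e = Th - \<theta>\<close> obeys the scalar-gain law \<open>e' = -\<gamma> \<Delta>\<^sup>2 e\<close>,
  resp. \<open>e(k+1) = \<gamma> / (\<gamma> + \<Delta>\<^sup>2) e(k)\<close>, which never increases its norm.
  The operator \<open>\<Phi>\<close> is itself nonexpansive in time, and a vector whose norm it preserves up to
  time \<open>T\<close> is fixed by it and orthogonal to every regressor before \<open>T\<close>.  Identifiability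
  therefore makes \<open>\<Phi>(T)\<close> a strict contraction, so \<open>\<parallel>\<Phi>(t)\<parallel> \<le> \<rho> < 1\<close> for \<open>t \<ge> T\<close>, and by
  compactness \<open>\<bar>\<Delta>(t)\<bar> = \<bar>det (I - \<Phi>(t))\<bar> \<ge> \<delta> > 0\<close>: from then on \<open>e\<close> decays
  exponentially.
\<close>

lemma outer_mult_vector [simp]: "outer v w *v x = (w \<bullet> x) *\<^sub>R v"
  by (simp add: outer_def vec_eq_iff matrix_vector_mult_def inner_vec_def sum_distrib_left algebra_simps)

lemma bounded_linear_matrix_vector_mult_left: "bounded_linear (\<lambda>A::real^'n^'m. A *v x)"
proof -
  have "linear (\<lambda>A::real^'n^'m. A *v x)"
    by (rule linearI) (simp_all add: matrix_vector_mult_add_rdistrib scaleR_matrix_vector_assoc)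
  then show ?thesis
    using linear_conv_bounded_linear by blast
qed

lemma adjugate_mult_vector:
  fixes A :: "real^'n^'n"
  assumes "det A \<noteq> 0"
  shows "adjugate A *v (A *v y) = det A *\<^sub>R y"
proof -
  obtain B where BA: "B ** A = mat 1"
    using assms invertible_det_nz invertible_def by blast
  have adjugate_eq: "adjugate A = det A *\<^sub>R B"
  proof -
    have row: "row l A = A $ l" for l
      by (simp add: row_def vec_eq_iff)
    have "adjugate A $ i $ j = B $ i $ j * det A" for i j
    proof -
      have "axis i 1 = (\<Sum>l\<in>UNIV. B $ i $ l *s row l A)"
        using arg_cong[OF BA, of "\<lambda>M. M $ i"]
        by (simp add: vec_eq_iff matrix_matrix_mult_def mat_def axis_def row)
      then show ?thesis
        using cramer_lemma_transpose[of j "B $ i" A] by (simp only: adjugate_def vec_lambda_beta row)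
    qed
    then show ?thesis
      by (simp add: vec_eq_iff)
  qed
  show ?thesis
    by (simp add: adjugate_eq scalar_matrix_assoc[symmetric] scaleR_matrix_vector_assoc[symmetric] matrix_vector_mul_assoc BA)
qed

lemma scaleR_det_adjugate_residual:
  fixes D :: "real^'n^'n"
  shows "det D *\<^sub>R (adjugate D *v (D *v \<theta>) - det D *\<^sub>R x) = - ((det D)\<^sup>2 *\<^sub>R (x - \<theta>))"
  by (cases "det D = 0") (simp_all add: adjugate_mult_vector power2_eq_square algebra_simps)

lemma orthogonal_to_full_rank_columns_imp_zero:
  fixes c :: "'m::finite \<Rightarrow> real^'n"
  assumes "rank (\<chi> i j. c j $ i) = CARD('n)" and "\<And>j. c j \<bullet> x = 0"
  shows "x = 0"
proof -
  let ?C = "(\<chi> i j. c j $ i) :: real^'m^'n"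
  have "inj ((*v) (transpose ?C))"
    using assms(1) by (simp add: full_rank_injective[symmetric] rank_transpose)
  moreover have "transpose ?C *v x = transpose ?C *v 0"
    using assms(2) by (simp add: vec_eq_iff matrix_vector_mult_def transpose_def inner_vec_def mult.commute)
  ultimately show ?thesis
    by (rule injD)
qed

lemma strict_contraction_uniform:
  fixes M :: "real^'n^'n"
  assumes "\<And>x. x \<noteq> 0 \<Longrightarrow> norm (M *v x) < norm x"
  obtains \<rho> where "0 \<le> \<rho>" "\<rho> < 1" "\<And>x. norm (M *v x) \<le> \<rho> * norm x"
proof -
  have "continuous_on (sphere 0 1) (\<lambda>x::real^'n. norm (M *v x))"
    by (intro continuous_intros linear_continuous_on matrix_vector_mul_bounded_linear)
  moreover have "sphere (0::real^'n) 1 \<noteq> {}"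
    using norm_axis_1 by (metis dist_0_norm empty_iff mem_sphere)
  ultimately obtain z where z: "norm z = 1" and z_max: "\<And>y. norm y = 1 \<Longrightarrow> norm (M *v y) \<le> norm (M *v z)"
    using continuous_attains_sup[OF compact_sphere, of 0 1] by (metis mem_sphere_0)
  have "norm (M *v x) \<le> norm (M *v z) * norm x" for x
  proof (cases "x = 0")
    case False
    then have "norm (M *v (x /\<^sub>R norm x)) \<le> norm (M *v z)"
      by (intro z_max) simp
    with False show ?thesis
      by (simp add: matrix_vector_mult_scaleR field_simps)
  qed simp
  moreover have "norm (M *v z) < 1"
    using assms[of z] z by fastforce
  ultimately show ?thesis
    using that[of "norm (M *v z)"] by simp
qed

lemma compact_matrices_with_norm_bound:
  "compact {M::real^'n^'m. \<forall>x. norm (M *v x) \<le> \<rho> * norm x}"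
  (is "compact ?K")
proof -
  have "closed {M::real^'n^'m. norm (M *v x) \<le> \<rho> * norm x}" for x
    by (intro closed_Collect_le continuous_intros linear_continuous_on
        bounded_linear_matrix_vector_mult_left)
  then have "closed ?K"
    by (simp add: Collect_all_eq closed_INT)
  moreover have "norm M \<le> real CARD('m) * (real CARD('n) * \<rho>)" if "M \<in> ?K" for M
  proof -
    have entry: "\<bar>M $ i $ j\<bar> \<le> \<rho>" for i j
    proof -
      have "\<bar>M $ i $ j\<bar> \<le> norm (M *v axis j 1)"
        using component_le_norm_cart[of "M *v axis j 1" i]
        by (simp add: matrix_vector_mult_basis column_def)
      also have "\<dots> \<le> \<rho> * norm (axis j (1::real))"
        using that by blast
      finally show ?thesis
        by simp
    qed
    have "norm M \<le> (\<Sum>i\<in>UNIV. norm (M $ i))"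
      unfolding norm_vec_def by (rule L2_set_le_sum) simp
    also have "\<dots> \<le> (\<Sum>i\<in>(UNIV::'m set). \<Sum>j\<in>(UNIV::'n set). \<rho>)"
      by (intro sum_mono order_trans[OF norm_le_l1_cart]) (simp add: entry)
    finally show ?thesis
      by simp
  qed
  then have "bounded ?K"
    unfolding bounded_iff by blast
  ultimately show ?thesis
    by (simp add: compact_eq_bounded_closed)
qed

lemma det_one_minus_bounded_below:
  fixes \<rho> :: real
  assumes "0 \<le> \<rho>" "\<rho> < 1"
  obtains \<delta> where "\<delta> > 0"
    "\<And>M::real^'n^'n. (\<And>x. norm (M *v x) \<le> \<rho> * norm x) \<Longrightarrow> \<delta> \<le> \<bar>det (mat 1 - M)\<bar>"
proof -
  define K where "K = {M::real^'n^'n. \<forall>x. norm (M *v x) \<le> \<rho> * norm x}"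
  have "compact K"
    unfolding K_def by (rule compact_matrices_with_norm_bound)
  moreover have "0 \<in> K"
    using assms(1) by (simp add: K_def)
  moreover have "continuous_on K (\<lambda>M. \<bar>det (mat 1 - M)\<bar>)"
    unfolding det_def by (intro continuous_intros)
  ultimately obtain M\<^sub>0 where "M\<^sub>0 \<in> K"
    and min: "\<And>M. M \<in> K \<Longrightarrow> \<bar>det (mat 1 - M\<^sub>0)\<bar> \<le> \<bar>det (mat 1 - M)\<bar>"
    using continuous_attains_inf[of K] by blast
  have "det (mat 1 - M) \<noteq> 0" if "M \<in> K" for M
  proof
    assume "det (mat 1 - M) = 0"
    then obtain x where x: "x \<noteq> 0" "(mat 1 - M) *v x = 0"
      using invertible_det_nz invertible_left_inverse matrix_left_invertible_ker by metis
    then have "M *v x = x"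
      by (simp add: matrix_vector_mult_diff_rdistrib)
    moreover have "norm (M *v x) \<le> \<rho> * norm x"
      using that by (simp add: K_def)
    ultimately show False
      using x(1) assms(2) by (simp add: mult_le_cancel_right1)
  qed
  with \<open>M\<^sub>0 \<in> K\<close> min show ?thesis
    by (intro that[of "\<bar>det (mat 1 - M\<^sub>0)\<bar>"]) (auto simp: K_def)
qed

lemma strict_contraction_det_bound:
  fixes M :: "real^'n^'n"
  assumes "\<And>x. x \<noteq> 0 \<Longrightarrow> norm (M *v x) < norm x"
  obtains \<delta> where "\<delta> > 0"
    "\<And>N. (\<And>x. norm (N *v x) \<le> norm (M *v x)) \<Longrightarrow> \<delta> \<le> \<bar>det (mat 1 - N)\<bar>"
proof -
  obtain \<rho> where "0 \<le> \<rho>" "\<rho> < 1" and \<rho>: "\<And>x. norm (M *v x) \<le> \<rho> * norm x"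
    using strict_contraction_uniform[OF assms] by blast
  obtain \<delta> where "\<delta> > 0" and \<delta>:
    "\<And>N::real^'n^'n. (\<And>x. norm (N *v x) \<le> \<rho> * norm x) \<Longrightarrow> \<delta> \<le> \<bar>det (mat 1 - N)\<bar>"
    using det_one_minus_bounded_below[OF \<open>0 \<le> \<rho>\<close> \<open>\<rho> < 1\<close>] by blast
  show ?thesis
  proof (rule that[OF \<open>\<delta> > 0\<close>])
    fix N :: "real^'n^'n"
    assume N: "\<And>x. norm (N *v x) \<le> norm (M *v x)"
    show "\<delta> \<le> \<bar>det (mat 1 - N)\<bar>"
    proof (rule \<delta>)
      show "norm (N *v x) \<le> \<rho> * norm x" for x
        using N[of x] \<rho>[of x] by linarith
    qed
  qed
qed

lemma norm_rank_one_update_squared: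
  fixes p x :: "real^'n"
  shows "(norm ((mat 1 - c *\<^sub>R outer p p) *v x))\<^sup>2
    = (norm x)\<^sup>2 - c * (2 - c * (norm p)\<^sup>2) * (p \<bullet> x)\<^sup>2"
proof -
  have "(mat 1 - c *\<^sub>R outer p p) *v x = x - (c * (p \<bullet> x)) *\<^sub>R p"
    by (simp add: matrix_vector_mult_diff_rdistrib scaleR_matrix_vector_assoc[symmetric])
  moreover have "(norm (x - (c * (p \<bullet> x)) *\<^sub>R p))\<^sup>2
      = (norm x)\<^sup>2 - c * (2 - c * (norm p)\<^sup>2) * (p \<bullet> x)\<^sup>2"
    unfolding power2_norm_eq_inner
    by (simp add: inner_diff_left inner_diff_right inner_commute power2_eq_square algebra_simps)
  ultimately show ?thesis
    by simp
qed

lemma has_real_derivative_inner_self: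
  assumes "(v has_vector_derivative v') (at t within S)"
  shows "((\<lambda>t. v t \<bullet> v t) has_real_derivative 2 * (v t \<bullet> v')) (at t within S)"
  using bounded_bilinear.has_vector_derivative[OF bounded_bilinear_inner assms assms]
  by (simp add: has_real_derivative_iff_has_vector_derivative inner_commute)

lemma norm_le_if_inner_vector_derivative_nonpos:
  fixes v :: "real \<Rightarrow> 'a::real_inner"
  assumes "a \<le> b" "{a..b} \<subseteq> S"
    and deriv: "\<And>t. t \<in> {a..b} \<Longrightarrow> (v has_vector_derivative v' t) (at t within S)"
    and nonpos: "\<And>t. a < t \<Longrightarrow> t < b \<Longrightarrow> v t \<bullet> v' t \<le> 0"
  shows "norm (v b) \<le> norm (v a)"
proof -
  have sq_deriv: "((\<lambda>t. v t \<bullet> v t) has_real_derivative 2 * (v t \<bullet> v' t)) (at t within {a..b})"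
    if "t \<in> {a..b}" for t
    using has_vector_derivative_within_subset[OF deriv[OF that] assms(2)]
    by (rule has_real_derivative_inner_self)
  have "v b \<bullet> v b \<le> v a \<bullet> v a"
  proof (rule DERIV_nonpos_imp_decreasing_open[OF \<open>a \<le> b\<close>])
    fix t assume "a < t" "t < b"
    with sq_deriv[of t] nonpos[of t] show "\<exists>y. ((\<lambda>t. v t \<bullet> v t) has_real_derivative y) (at t) \<and> y \<le> 0"
      by (auto simp: at_within_Icc_at)
  next
    show "continuous_on {a..b} (\<lambda>t. v t \<bullet> v t)"
      using sq_deriv DERIV_continuous continuous_on_eq_continuous_within by blast
  qed
  then show ?thesis
    by (simp add: norm_eq_sqrt_inner)
qed

lemma exp_decay_of_tail_bound:
  fixes u E r T t :: real
  assumes "0 \<le> r" "0 \<le> E" "u \<le> E" and tail: "T \<le> t \<Longrightarrow> u \<le> E * exp (- r * (t - T))"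
  shows "u \<le> E * exp (r * T) * exp (- r * t)"
proof -
  have rewrite: "E * exp (r * T) * exp (- r * t) = E * exp (- r * (t - T))"
    by (simp add: exp_add[symmetric] algebra_simps)
  show ?thesis
  proof (cases "T \<le> t")
    case False
    then have "1 \<le> exp (- r * (t - T))"
      using assms(1) by (simp add: mult_nonneg_nonpos)
    then have "E \<le> E * exp (- r * (t - T))"
      using assms(2) by (simp add: mult_le_cancel_left1)
    with assms(3) show ?thesis
      unfolding rewrite by linarith
  qed (use tail in \<open>simp only: rewrite\<close>)
qed

lemma ct_exp_convergence_of_excitation:
  fixes x :: "real \<Rightarrow> 'a::real_inner" and \<Delta> :: "real \<Rightarrow> real"
  assumes "\<gamma> > 0"
    and deriv: "\<And>t. t \<ge> 0 \<Longrightarrow> (x has_vector_derivative - ((\<gamma> * (\<Delta> t)\<^sup>2) *\<^sub>R (x t - \<theta>)))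
          (at t within {0..})"
    and "0 \<le> T" "\<delta> > 0" and excited: "\<And>t. T \<le> t \<Longrightarrow> \<delta> \<le> \<bar>\<Delta> t\<bar>"
  shows "\<exists>c r. r > 0 \<and> (\<forall>t\<ge>0. norm (x t - \<theta>) \<le> c * exp (- r * t))"
proof -
  define E where "E = norm (x 0 - \<theta>)"
  define r where "r = \<gamma> * \<delta>\<^sup>2"
  have "r > 0"
    using assms by (simp add: r_def)
  have error_deriv: "((\<lambda>t. x t - \<theta>) has_vector_derivative - ((\<gamma> * (\<Delta> t)\<^sup>2) *\<^sub>R (x t - \<theta>)))
      (at t within {0..})" if "t \<ge> 0" for t
    using has_vector_derivative_diff[OF deriv[OF that] has_vector_derivative_const] by simp
  have bounded: "norm (x t - \<theta>) \<le> E" if "t \<ge> 0" for t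
    unfolding E_def
    by (rule norm_le_if_inner_vector_derivative_nonpos[OF that _ error_deriv])
      (use \<open>\<gamma> > 0\<close> in auto)
  have tail: "norm (x t - \<theta>) \<le> E * exp (- r * (t - T))" if "T \<le> t" for t
  proof -
    \<comment> \<open>Once \<open>\<bar>\<Delta>\<bar> \<ge> \<delta>\<close>, the rescaled error \<open>exp (r t) (x t - \<theta>)\<close> is nonexpansive.\<close>
    let ?v = "\<lambda>t. exp (r * t) *\<^sub>R (x t - \<theta>)"
    have "norm (?v t) \<le> norm (?v T)"
    proof (rule norm_le_if_inner_vector_derivative_nonpos[OF that])
      show "{T..t} \<subseteq> {0..}"
        using \<open>0 \<le> T\<close> by auto
      show "(?v has_vector_derivative (r - \<gamma> * (\<Delta> s)\<^sup>2) *\<^sub>R ?v s) (at s within {0..})"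
        if "s \<in> {T..t}" for s
      proof -
        have "((\<lambda>t. exp (r * t)) has_real_derivative exp (r * s) * r) (at s within {0..})"
          by (auto intro!: derivative_eq_intros)
        from has_vector_derivative_scaleR[OF this error_deriv] that \<open>0 \<le> T\<close>
        show ?thesis
          by (simp add: algebra_simps)
      qed
      show "?v s \<bullet> ((r - \<gamma> * (\<Delta> s)\<^sup>2) *\<^sub>R ?v s) \<le> 0" if "T < s" for s
      proof -
        have "\<delta>\<^sup>2 \<le> (\<Delta> s)\<^sup>2"
          using power_mono[OF excited[of s], of 2] that \<open>\<delta> > 0\<close> by simp
        then have "r - \<gamma> * (\<Delta> s)\<^sup>2 \<le> 0"
          using \<open>\<gamma> > 0\<close> by (simp add: r_def)
        then show ?thesis
          by (simp add: mult_nonpos_nonneg)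
      qed
    qed
    also have "norm (?v T) \<le> exp (r * T) * E"
      using bounded[OF \<open>0 \<le> T\<close>] by simp
    finally have "exp (r * t) * norm (x t - \<theta>) \<le> exp (r * T) * E"
      by simp
    then show ?thesis
      by (simp add: exp_diff field_simps)
  qed
  show ?thesis
    using exp_decay_of_tail_bound[OF less_imp_le[OF \<open>r > 0\<close>] _ bounded tail] \<open>r > 0\<close> E_def
    by (intro exI[of _ "E * exp (r * T)"] exI[of _ r]) auto
qed

lemma dt_exp_convergence_of_excitation:
  fixes x :: "nat \<Rightarrow> 'a::real_normed_vector" and \<Delta> :: "nat \<Rightarrow> real"
  assumes "\<gamma> > 0"
    and step: "\<And>k. x (Suc k) - \<theta> = (\<gamma> / (\<gamma> + (\<Delta> k)\<^sup>2)) *\<^sub>R (x k - \<theta>)"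
    and "\<delta> > 0" and excited: "\<And>k. K \<le> k \<Longrightarrow> \<delta> \<le> \<bar>\<Delta> k\<bar>"
  shows "\<exists>c r. r > 0 \<and> (\<forall>k. norm (x k - \<theta>) \<le> c * exp (- r * real k))"
proof -
  define E where "E = norm (x 0 - \<theta>)"
  define a where "a = \<gamma> / (\<gamma> + \<delta>\<^sup>2)"
  define r where "r = - ln a"
  have "\<gamma> < \<gamma> + \<delta>\<^sup>2"
    using \<open>\<delta> > 0\<close> by simp
  then have "0 < a" "a < 1"
    using \<open>\<gamma> > 0\<close> unfolding a_def by (simp_all only: divide_pos_pos divide_less_eq_1_pos)
  then have "r > 0"
    by (simp add: r_def)
  have den: "0 < \<gamma> + (\<Delta> k)\<^sup>2" for k
    using \<open>\<gamma> > 0\<close> by (simp add: add_pos_nonneg)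
  have step_norm: "norm (x (Suc k) - \<theta>) = \<gamma> / (\<gamma> + (\<Delta> k)\<^sup>2) * norm (x k - \<theta>)" for k
    using \<open>\<gamma> > 0\<close> den[of k] by (simp add: step)
  have bounded: "norm (x k - \<theta>) \<le> E" for k
  proof (induction k)
    case (Suc k)
    have "\<gamma> / (\<gamma> + (\<Delta> k)\<^sup>2) * norm (x k - \<theta>) \<le> 1 * E"
      by (rule mult_mono) (use Suc den[of k] \<open>\<gamma> > 0\<close> in \<open>auto simp: divide_le_eq\<close>)
    then show ?case
      by (simp add: step_norm)
  qed (simp add: E_def)
  have tail: "norm (x (K + m) - \<theta>) \<le> E * a ^ m" for m
  proof (induction m)
    case (Suc m)
    have "\<gamma> / (\<gamma> + (\<Delta> (K + m))\<^sup>2) \<le> a"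
      using power_mono[OF excited[of "K + m"], of 2] \<open>\<gamma> > 0\<close> \<open>\<delta> > 0\<close>
      unfolding a_def by (intro divide_left_mono) (auto simp: add_pos_nonneg)
    then have "norm (x (K + Suc m) - \<theta>) \<le> a * norm (x (K + m) - \<theta>)"
      unfolding add_Suc_right step_norm by (rule mult_right_mono) simp
    also have "\<dots> \<le> E * a ^ Suc m"
      using Suc \<open>0 < a\<close> by (simp add: mult_left_mono mult.left_commute)
    finally show ?case .
  qed (simp add: bounded)
  have "norm (x k - \<theta>) \<le> E * exp (- r * (real k - real K))" if "K \<le> k" for k
  proof -
    have "a ^ (k - K) = exp (real (k - K) * ln a)"
      using \<open>0 < a\<close> by (simp add: exp_of_nat_mult)
    also have "\<dots> = exp (- r * (real k - real K))"
      using that by (simp add: r_def of_nat_diff mult.commute)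
    finally show ?thesis
      using tail[of "k - K"] that by (metis le_add_diff_inverse)
  qed
  then show ?thesis
    using exp_decay_of_tail_bound[OF less_imp_le[OF \<open>r > 0\<close>] _ bounded] \<open>r > 0\<close> E_def
    by (intro exI[of _ "E * exp (r * real K)"] exI[of _ r]) auto
qed

context
  fixes \<gamma>g :: "real \<Rightarrow> real" and \<phi> :: "real \<Rightarrow> real^'q" and Phi :: "real \<Rightarrow> real^'q^'q"
  assumes gain_pos: "\<And>t. t \<ge> 0 \<Longrightarrow> \<gamma>g t > 0"
    and Phi_deriv: "\<And>t. t \<ge> 0 \<Longrightarrow> (Phi has_vector_derivative
          (- (\<gamma>g t *\<^sub>R (outer (\<phi> t) (\<phi> t) ** Phi t)))) (at t within {0..})"
    and Phi_0: "Phi 0 = mat 1"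
begin

lemma ct_Phi_mult_vector_derivative:
  assumes "t \<ge> 0"
  shows "((\<lambda>s. Phi s *v x) has_vector_derivative - ((\<gamma>g t * (\<phi> t \<bullet> (Phi t *v x))) *\<^sub>R \<phi> t))
    (at t within {0..})"
  using bounded_linear.has_vector_derivative[OF bounded_linear_matrix_vector_mult_left Phi_deriv[OF assms]]
  by (simp add: linear_simps(4)[OF bounded_linear_matrix_vector_mult_left]
      scaleR_matrix_vector_assoc[symmetric] matrix_vector_mul_assoc[symmetric])

lemma ct_Phi_nonexpansive:
  assumes "0 \<le> a" "a \<le> b"
  shows "norm (Phi b *v x) \<le> norm (Phi a *v x)"
proof (rule norm_le_if_inner_vector_derivative_nonpos[OF \<open>a \<le> b\<close> _ ct_Phi_mult_vector_derivative])
  show "(Phi t *v x) \<bullet> - ((\<gamma>g t * (\<phi> t \<bullet> (Phi t *v x))) *\<^sub>R \<phi> t) \<le> 0" if "a < t" for t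
    using gain_pos[of t] that assms by (simp add: inner_commute mult.assoc)
qed (use assms in auto)

lemma ct_Phi_norm_preserving_imp_orthogonal:
  assumes "norm x \<le> norm (Phi T *v x)" and "0 < s" "s < T"
  shows "\<phi> s \<bullet> x = 0"
proof -
  have norm_const: "norm (Phi s *v x) = norm x" if "0 \<le> s" "s \<le> T" for s
    using ct_Phi_nonexpansive[of 0 s x] ct_Phi_nonexpansive[of s T x] assms(1) that
    by (simp add: Phi_0)
  have orth: "\<phi> s \<bullet> (Phi s *v x) = 0" if "0 < s" "s < T" for s
  proof -
    \<comment> \<open>\<open>norm (Phi s *v x)\<^sup>2\<close> is locally constant, so its derivative vanishes.\<close>
    let ?f = "\<lambda>s. (Phi s *v x) \<bullet> (Phi s *v x)"
    have "at s within {0..} = at s"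
      using that by (intro at_within_interior) simp
    then have "(?f has_real_derivative - 2 * \<gamma>g s * (\<phi> s \<bullet> (Phi s *v x))\<^sup>2) (at s)"
      using has_real_derivative_inner_self[OF ct_Phi_mult_vector_derivative, of s x] that
      by (simp add: inner_commute power2_eq_square mult.assoc)
    moreover have "?f s = ?f y" if "\<bar>s - y\<bar> < min s (T - s)" for y
      using norm_const[of s] norm_const[of y] that \<open>0 < s\<close> \<open>s < T\<close>
      by (simp add: power2_norm_eq_inner[symmetric] abs_less_iff)
    ultimately have "- 2 * \<gamma>g s * (\<phi> s \<bullet> (Phi s *v x))\<^sup>2 = 0"
      using that by (intro DERIV_local_const[of ?f _ s "min s (T - s)"]) auto
    with gain_pos[of s] that show ?thesis
      by simp
  qed
  have "norm (Phi s *v x - x) \<le> norm (Phi 0 *v x - x)"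
    using orth \<open>s < T\<close>
    by (intro norm_le_if_inner_vector_derivative_nonpos[OF less_imp_le[OF \<open>0 < s\<close>] _
          has_vector_derivative_diff[OF ct_Phi_mult_vector_derivative has_vector_derivative_const]])
      auto
  then have "Phi s *v x = x"
    by (simp add: Phi_0)
  with orth[OF assms(2,3)] show ?thesis
    by simp
qed

lemma ct_Phi_strict_contraction:
  assumes rank: "rank (\<chi> i j. \<phi> (\<tau> j) $ i) = CARD('q)"
    and \<tau>: "\<And>j. 0 < \<tau> j" "\<And>j. \<tau> j < T" and "x \<noteq> 0"
  shows "norm (Phi T *v x) < norm x"
proof (rule ccontr)
  assume "\<not> norm (Phi T *v x) < norm x"
  then have "\<phi> (\<tau> j) \<bullet> x = 0" for j
    using ct_Phi_norm_preserving_imp_orthogonal[of x T "\<tau> j"] \<tau>[of j] by simp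
  then have "x = 0"
    by (rule orthogonal_to_full_rank_columns_imp_zero[of "\<lambda>j. \<phi> (\<tau> j)", OF rank])
  with \<open>x \<noteq> 0\<close> show False ..
qed

lemma ct_det_eventually_bounded_below:
  assumes "\<exists>\<tau> :: 'q \<Rightarrow> real. (\<forall>i. \<tau> i > 0) \<and> rank (\<chi> i j. \<phi> (\<tau> j) $ i) = CARD('q)"
  obtains T \<delta> where "0 \<le> T" "\<delta> > 0" "\<And>t. T \<le> t \<Longrightarrow> \<delta> \<le> \<bar>det (mat 1 - Phi t)\<bar>"
proof -
  obtain \<tau> :: "'q \<Rightarrow> real" where \<tau>_pos: "\<And>j. 0 < \<tau> j" and rank: "rank (\<chi> i j. \<phi> (\<tau> j) $ i) = CARD('q)"
    using assms by blast
  define T where "T = Max (range \<tau>) + 1"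
  have \<tau>_less: "\<tau> j < T" for j
  proof -
    have "\<tau> j \<le> Max (range \<tau>)"
      by (rule Max_ge) auto
    then show ?thesis
      unfolding T_def by linarith
  qed
  then have "0 \<le> T"
    using \<tau>_pos by (meson less_le_trans less_imp_le)
  obtain \<delta> where "\<delta> > 0"
    and \<delta>: "\<And>N. (\<And>x. norm (N *v x) \<le> norm (Phi T *v x)) \<Longrightarrow> \<delta> \<le> \<bar>det (mat 1 - N)\<bar>"
    using strict_contraction_det_bound[OF ct_Phi_strict_contraction[OF rank \<tau>_pos \<tau>_less]] by blast
  show ?thesis
  proof (rule that[OF \<open>0 \<le> T\<close> \<open>\<delta> > 0\<close>])
    show "\<delta> \<le> \<bar>det (mat 1 - Phi t)\<bar>" if "T \<le> t" for t
      using \<open>0 \<le> T\<close> that by (intro \<delta> ct_Phi_nonexpansive)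
  qed
qed

context
  fixes thg :: "real \<Rightarrow> real^'q" and \<theta> \<theta>g0 :: "real^'q"
  assumes thg_deriv: "\<And>t. t \<ge> 0 \<Longrightarrow> (thg has_vector_derivative
          (- (\<gamma>g t *\<^sub>R (outer (\<phi> t) (\<phi> t) *v thg t)) + (\<gamma>g t * (\<phi> t \<bullet> \<theta>)) *\<^sub>R \<phi> t))
          (at t within {0..})"
    and thg_0: "thg 0 = \<theta>g0"
begin

lemma ct_gpebo_regression:
  assumes "t \<ge> 0"
  shows "thg t - Phi t *v \<theta>g0 = (mat 1 - Phi t) *v \<theta>"
proof -
  define e where "e t = thg t - \<theta> - Phi t *v (\<theta>g0 - \<theta>)" for t
  have e_deriv: "(e has_vector_derivative - ((\<gamma>g t * (\<phi> t \<bullet> e t)) *\<^sub>R \<phi> t)) (at t within {0..})"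
    if "t \<ge> 0" for t
  proof -
    have "(e has_vector_derivative
        (- (\<gamma>g t *\<^sub>R (outer (\<phi> t) (\<phi> t) *v thg t)) + (\<gamma>g t * (\<phi> t \<bullet> \<theta>)) *\<^sub>R \<phi> t) - 0
        - - ((\<gamma>g t * (\<phi> t \<bullet> (Phi t *v (\<theta>g0 - \<theta>)))) *\<^sub>R \<phi> t)) (at t within {0..})"
      unfolding e_def
      by (intro has_vector_derivative_diff thg_deriv has_vector_derivative_const
          ct_Phi_mult_vector_derivative that)
    then show ?thesis
      by (simp add: e_def inner_diff_right algebra_simps)
  qed
  have "norm (e t) \<le> norm (e 0)"
  proof (rule norm_le_if_inner_vector_derivative_nonpos[OF \<open>t \<ge> 0\<close> _ e_deriv])
    show "e s \<bullet> - ((\<gamma>g s * (\<phi> s \<bullet> e s)) *\<^sub>R \<phi> s) \<le> 0" if "0 < s" for s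
      using gain_pos[of s] that by (simp add: inner_commute mult.assoc)
  qed auto
  also have "e 0 = 0"
    by (simp add: e_def thg_0 Phi_0)
  finally show ?thesis
    by (simp add: e_def matrix_vector_mult_diff_distrib matrix_vector_mult_diff_rdistrib algebra_simps)
qed

lemma ct_estimator_exp_convergence:
  assumes "\<gamma> > 0"
    and Th_deriv: "\<And>t. t \<ge> 0 \<Longrightarrow> (Th has_vector_derivative
          (\<gamma> * det (mat 1 - Phi t)) *\<^sub>R
            (adjugate (mat 1 - Phi t) *v (thg t - Phi t *v \<theta>g0)
             - det (mat 1 - Phi t) *\<^sub>R Th t)) (at t within {0..})"
    and ident: "\<exists>\<tau> :: 'q \<Rightarrow> real. (\<forall>i. \<tau> i > 0) \<and> rank (\<chi> i j. \<phi> (\<tau> j) $ i) = CARD('q)"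
  shows "\<exists>c r. r > 0 \<and> (\<forall>t\<ge>0. norm (Th t - \<theta>) \<le> c * exp (- r * t))"
proof -
  obtain T \<delta> where "0 \<le> T" "\<delta> > 0" and excited: "\<And>t. T \<le> t \<Longrightarrow> \<delta> \<le> \<bar>det (mat 1 - Phi t)\<bar>"
    using ct_det_eventually_bounded_below[OF ident] by blast
  have "(Th has_vector_derivative - ((\<gamma> * (det (mat 1 - Phi t))\<^sup>2) *\<^sub>R (Th t - \<theta>)))
      (at t within {0..})" if "t \<ge> 0" for t
  proof -
    let ?D = "mat 1 - Phi t"
    have "(\<gamma> * det ?D) *\<^sub>R (adjugate ?D *v (thg t - Phi t *v \<theta>g0) - det ?D *\<^sub>R Th t)
        = \<gamma> *\<^sub>R (det ?D *\<^sub>R (adjugate ?D *v (?D *v \<theta>) - det ?D *\<^sub>R Th t))"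
      by (simp add: ct_gpebo_regression[OF that])
    also have "\<dots> = - ((\<gamma> * (det ?D)\<^sup>2) *\<^sub>R (Th t - \<theta>))"
      by (simp add: scaleR_det_adjugate_residual)
    finally show ?thesis
      using Th_deriv[OF that] by simp
  qed
  then show ?thesis
    by (rule ct_exp_convergence_of_excitation[OF \<open>\<gamma> > 0\<close> _ \<open>0 \<le> T\<close> \<open>\<delta> > 0\<close> excited])
qed

end

end

text \<open>Here \<open>c\<close> stands for the gain \<open>g(k) = 1 / (\<gamma>\<^sub>g(k) + \<bar>\<phi>(k)\<bar>\<^sup>2)\<close> of the discrete-time filters.\<close>

context
  fixes c :: "nat \<Rightarrow> real" and \<phi> :: "nat \<Rightarrow> real^'q" and Phi :: "nat \<Rightarrow> real^'q^'q"
  assumes gain_pos: "\<And>k. c k > 0"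
    and gain_small: "\<And>k. c k * (norm (\<phi> k))\<^sup>2 < 2"
    and Phi_Suc: "\<And>k. Phi (Suc k) = (mat 1 - c k *\<^sub>R outer (\<phi> k) (\<phi> k)) ** Phi k"
    and Phi_0: "Phi 0 = mat 1"
begin

lemma dt_Phi_step_norm:
  "(norm (Phi (Suc k) *v x))\<^sup>2
    = (norm (Phi k *v x))\<^sup>2 - c k * (2 - c k * (norm (\<phi> k))\<^sup>2) * (\<phi> k \<bullet> (Phi k *v x))\<^sup>2"
  by (simp add: Phi_Suc matrix_vector_mul_assoc[symmetric] norm_rank_one_update_squared)

lemma dt_Phi_step_nonexpansive: "norm (Phi (Suc k) *v x) \<le> norm (Phi k *v x)"
proof -
  have "0 \<le> c k * (2 - c k * (norm (\<phi> k))\<^sup>2) * (\<phi> k \<bullet> (Phi k *v x))\<^sup>2"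
    using gain_pos[of k] gain_small[of k] by (intro mult_nonneg_nonneg) auto
  then have "(norm (Phi (Suc k) *v x))\<^sup>2 \<le> (norm (Phi k *v x))\<^sup>2"
    using dt_Phi_step_norm[of k x] by linarith
  then show ?thesis
    by (rule power2_le_imp_le) simp
qed

lemma dt_Phi_nonexpansive: "j \<le> k \<Longrightarrow> norm (Phi k *v x) \<le> norm (Phi j *v x)"
proof (induction k rule: dec_induct)
  case (step k)
  then show ?case
    using dt_Phi_step_nonexpansive[of k x] by linarith
qed simp

lemma dt_Phi_norm_preserving_imp_orthogonal:
  "norm x \<le> norm (Phi k *v x) \<Longrightarrow> Phi k *v x = x \<and> (\<forall>j<k. \<phi> j \<bullet> x = 0)"
proof (induction k)
  case 0
  then show ?case
    by (simp add: Phi_0)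
next
  case (Suc k)
  then have "norm x \<le> norm (Phi k *v x)"
    using dt_Phi_step_nonexpansive[of k x] by linarith
  with Suc.IH have fixed: "Phi k *v x = x" and orth: "\<forall>j<k. \<phi> j \<bullet> x = 0"
    by auto
  have "(norm x)\<^sup>2 \<le> (norm (Phi (Suc k) *v x))\<^sup>2"
    using power_mono[OF Suc.prems norm_ge_zero, of 2] .
  then have "c k * (2 - c k * (norm (\<phi> k))\<^sup>2) * (\<phi> k \<bullet> x)\<^sup>2 \<le> 0"
    using dt_Phi_step_norm[of k x] unfolding fixed by linarith
  moreover have "0 < c k * (2 - c k * (norm (\<phi> k))\<^sup>2)"
    using gain_pos[of k] gain_small[of k] by simp
  ultimately have "(\<phi> k \<bullet> x)\<^sup>2 \<le> 0"
    using mult_le_cancel_left_pos[of "c k * (2 - c k * (norm (\<phi> k))\<^sup>2)" "(\<phi> k \<bullet> x)\<^sup>2" 0] by simp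
  then have "\<phi> k \<bullet> x = 0"
    by simp
  then have "Phi (Suc k) *v x = x"
    by (simp add: Phi_Suc matrix_vector_mul_assoc[symmetric] fixed matrix_vector_mult_diff_rdistrib
        scaleR_matrix_vector_assoc[symmetric])
  with orth \<open>\<phi> k \<bullet> x = 0\<close> show ?case
    by (auto simp: less_Suc_eq)
qed

lemma dt_Phi_strict_contraction:
  assumes rank: "rank (\<chi> i j. \<phi> (\<tau> j) $ i) = CARD('q)"
    and \<tau>: "\<And>j. \<tau> j < K" and "x \<noteq> 0"
  shows "norm (Phi K *v x) < norm x"
proof (rule ccontr)
  assume "\<not> norm (Phi K *v x) < norm x"
  then have "\<phi> (\<tau> j) \<bullet> x = 0" for j
    using dt_Phi_norm_preserving_imp_orthogonal[of x K] \<tau>[of j] by simp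
  then have "x = 0"
    by (rule orthogonal_to_full_rank_columns_imp_zero[of "\<lambda>j. \<phi> (\<tau> j)", OF rank])
  with \<open>x \<noteq> 0\<close> show False ..
qed

lemma dt_det_eventually_bounded_below:
  assumes "\<exists>\<tau> :: 'q \<Rightarrow> nat. rank (\<chi> i j. \<phi> (\<tau> j) $ i) = CARD('q)"
  obtains K \<delta> where "\<delta> > 0" "\<And>k. K \<le> k \<Longrightarrow> \<delta> \<le> \<bar>det (mat 1 - Phi k)\<bar>"
proof -
  obtain \<tau> :: "'q \<Rightarrow> nat" where rank: "rank (\<chi> i j. \<phi> (\<tau> j) $ i) = CARD('q)"
    using assms by blast
  define K where "K = Suc (Max (range \<tau>))"
  have \<tau>_less: "\<tau> j < K" for j
    by (simp add: K_def le_imp_less_Suc)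
  obtain \<delta> where "\<delta> > 0"
    and \<delta>: "\<And>N. (\<And>x. norm (N *v x) \<le> norm (Phi K *v x)) \<Longrightarrow> \<delta> \<le> \<bar>det (mat 1 - N)\<bar>"
    using strict_contraction_det_bound[OF dt_Phi_strict_contraction[OF rank \<tau>_less]] by blast
  show ?thesis
  proof (rule that[OF \<open>\<delta> > 0\<close>])
    show "\<delta> \<le> \<bar>det (mat 1 - Phi k)\<bar>" if "K \<le> k" for k
      using that by (intro \<delta> dt_Phi_nonexpansive)
  qed
qed

context
  fixes thg :: "nat \<Rightarrow> real^'q" and \<theta> \<theta>g0 :: "real^'q"
  assumes thg_Suc: "\<And>k. thg (Suc k) =
      (mat 1 - c k *\<^sub>R outer (\<phi> k) (\<phi> k)) *v thg k + (c k * (\<phi> k \<bullet> \<theta>)) *\<^sub>R \<phi> k"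
    and thg_0: "thg 0 = \<theta>g0"
begin

lemma dt_gpebo_regression: "thg k - Phi k *v \<theta>g0 = (mat 1 - Phi k) *v \<theta>"
proof -
  have "thg k - \<theta> = Phi k *v (\<theta>g0 - \<theta>)"
  proof (induction k)
    case 0
    then show ?case
      by (simp add: thg_0 Phi_0)
  next
    case (Suc k)
    have "thg (Suc k) - \<theta> = (mat 1 - c k *\<^sub>R outer (\<phi> k) (\<phi> k)) *v (thg k - \<theta>)"
      by (simp add: thg_Suc matrix_vector_mult_diff_distrib matrix_vector_mult_diff_rdistrib
          scaleR_matrix_vector_assoc[symmetric] inner_diff_right algebra_simps)
    also have "\<dots> = Phi (Suc k) *v (\<theta>g0 - \<theta>)"
      by (simp add: Suc.IH Phi_Suc matrix_vector_mul_assoc)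
    finally show ?case .
  qed
  then show ?thesis
    by (simp add: matrix_vector_mult_diff_distrib matrix_vector_mult_diff_rdistrib algebra_simps)
qed

lemma dt_estimator_exp_convergence:
  assumes "\<gamma> > 0"
    and Th_Suc: "\<And>k. Th (Suc k) = Th k +
          (det (mat 1 - Phi k) / (\<gamma> + (det (mat 1 - Phi k))\<^sup>2)) *\<^sub>R
            (adjugate (mat 1 - Phi k) *v (thg k - Phi k *v \<theta>g0)
             - det (mat 1 - Phi k) *\<^sub>R Th k)"
    and ident: "\<exists>\<tau> :: 'q \<Rightarrow> nat. rank (\<chi> i j. \<phi> (\<tau> j) $ i) = CARD('q)"
  shows "\<exists>c r. r > 0 \<and> (\<forall>k. norm (Th k - \<theta>) \<le> c * exp (- r * real k))"
proof -
  obtain K \<delta> where "\<delta> > 0" and excited: "\<And>k. K \<le> k \<Longrightarrow> \<delta> \<le> \<bar>det (mat 1 - Phi k)\<bar>"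
    using dt_det_eventually_bounded_below[OF ident] by blast
  have "Th (Suc k) - \<theta> = (\<gamma> / (\<gamma> + (det (mat 1 - Phi k))\<^sup>2)) *\<^sub>R (Th k - \<theta>)" for k
  proof -
    let ?D = "mat 1 - Phi k"
    have den: "\<gamma> + (det ?D)\<^sup>2 > 0"
      using \<open>\<gamma> > 0\<close> by (simp add: add_pos_nonneg)
    have "Th (Suc k) - \<theta> = (Th k - \<theta>)
        + (1 / (\<gamma> + (det ?D)\<^sup>2)) *\<^sub>R (det ?D *\<^sub>R (adjugate ?D *v (?D *v \<theta>) - det ?D *\<^sub>R Th k))"
      by (simp add: Th_Suc dt_gpebo_regression)
    also have "\<dots> = (1 - (det ?D)\<^sup>2 / (\<gamma> + (det ?D)\<^sup>2)) *\<^sub>R (Th k - \<theta>)"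
      unfolding scaleR_det_adjugate_residual by (simp add: scaleR_diff_left)
    also have "1 - (det ?D)\<^sup>2 / (\<gamma> + (det ?D)\<^sup>2) = \<gamma> / (\<gamma> + (det ?D)\<^sup>2)"
      using den by (simp add: field_simps)
    finally show ?thesis .
  qed
  then show ?thesis
    by (rule dt_exp_convergence_of_excitation[OF \<open>\<gamma> > 0\<close> _ \<open>\<delta> > 0\<close> excited])
qed

end

end

theorem proposition2:
  fixes \<theta> \<theta>g0 \<theta>0 :: "real^'q" and \<gamma> :: real
    \<comment> \<open>continuous-time data\<close>
    and \<phi> :: "real \<Rightarrow> real^'q" and \<gamma>g :: "real \<Rightarrow> real"
    and thg Th :: "real \<Rightarrow> real^'q" and Phi :: "real \<Rightarrow> real^'q^'q"
    \<comment> \<open>discrete-time data\<close>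
    and \<phi>d :: "nat \<Rightarrow> real^'q" and \<gamma>gd :: "nat \<Rightarrow> real"
    and thgd Thd :: "nat \<Rightarrow> real^'q" and Phid :: "nat \<Rightarrow> real^'q^'q"
  assumes gamma_pos: "\<gamma> > 0"
    \<comment> \<open>CT hypotheses\<close>
    and ct_gg_pos: "\<And>t. t \<ge> 0 \<Longrightarrow> \<gamma>g t > 0"
    and ct_gg_cont: "continuous_on {0..} \<gamma>g"
    and ct_phi_cont: "continuous_on {0..} \<phi>"
    and ct_phi_bdd: "bounded (\<phi> ` {0..})"
    and ct_thg: "\<And>t. t \<ge> 0 \<Longrightarrow> (thg has_vector_derivative
          (- (\<gamma>g t *\<^sub>R (outer (\<phi> t) (\<phi> t) *v thg t)) + (\<gamma>g t * (\<phi> t \<bullet> \<theta>)) *\<^sub>R \<phi> t))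
          (at t within {0..})"
    and ct_thg0: "thg 0 = \<theta>g0"
    and ct_Phi: "\<And>t. t \<ge> 0 \<Longrightarrow> (Phi has_vector_derivative
          (- (\<gamma>g t *\<^sub>R (outer (\<phi> t) (\<phi> t) ** Phi t)))) (at t within {0..})"
    and ct_Phi0: "Phi 0 = mat 1"
    and ct_Th: "\<And>t. t \<ge> 0 \<Longrightarrow> (Th has_vector_derivative
          (\<gamma> * det (mat 1 - Phi t)) *\<^sub>R
            (adjugate (mat 1 - Phi t) *v (thg t - Phi t *v \<theta>g0)
             - det (mat 1 - Phi t) *\<^sub>R Th t)) (at t within {0..})"
    and ct_Th0: "Th 0 = \<theta>0"
    and ct_ident: "\<exists>\<tau> :: 'q \<Rightarrow> real. (\<forall>i. \<tau> i > 0) \<and>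
          rank (\<chi> i j. \<phi> (\<tau> j) $ i) = CARD('q)"
    \<comment> \<open>DT hypotheses\<close>
    and dt_gg_pos: "\<And>k. \<gamma>gd k > 0"
    and dt_phi_bdd: "bounded (range \<phi>d)"
    and dt_thg: "\<And>k. thgd (Suc k) =
          (mat 1 - (1 / (\<gamma>gd k + (norm (\<phi>d k))\<^sup>2)) *\<^sub>R outer (\<phi>d k) (\<phi>d k)) *v thgd k
          + ((1 / (\<gamma>gd k + (norm (\<phi>d k))\<^sup>2)) * (\<phi>d k \<bullet> \<theta>)) *\<^sub>R \<phi>d k"
    and dt_thg0: "thgd 0 = \<theta>g0"
    and dt_Phi: "\<And>k. Phid (Suc k) =
          (mat 1 - (1 / (\<gamma>gd k + (norm (\<phi>d k))\<^sup>2)) *\<^sub>R outer (\<phi>d k) (\<phi>d k)) ** Phid k"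
    and dt_Phi0: "Phid 0 = mat 1"
    and dt_Th: "\<And>k. Thd (Suc k) = Thd k +
          (det (mat 1 - Phid k) / (\<gamma> + (det (mat 1 - Phid k))\<^sup>2)) *\<^sub>R
            (adjugate (mat 1 - Phid k) *v (thgd k - Phid k *v \<theta>g0)
             - det (mat 1 - Phid k) *\<^sub>R Thd k)"
    and dt_Th0: "Thd 0 = \<theta>0"
    and dt_ident: "\<exists>\<tau> :: 'q \<Rightarrow> nat. rank (\<chi> i j. \<phi>d (\<tau> j) $ i) = CARD('q)"
  shows "(\<exists>c r. r > 0 \<and> (\<forall>t\<ge>0. norm (Th t - \<theta>) \<le> c * exp (- r * t)))
       \<and> (\<exists>c r. r > 0 \<and> (\<forall>k. norm (Thd k - \<theta>) \<le> c * exp (- r * real k)))"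
proof
  show "\<exists>c r. r > 0 \<and> (\<forall>t\<ge>0. norm (Th t - \<theta>) \<le> c * exp (- r * t))"
    by (rule ct_estimator_exp_convergence[OF ct_gg_pos ct_Phi ct_Phi0 ct_thg ct_thg0 gamma_pos ct_Th ct_ident])
next
  define c where "c k = 1 / (\<gamma>gd k + (norm (\<phi>d k))\<^sup>2)" for k
  have "c k > 0 \<and> c k * (norm (\<phi>d k))\<^sup>2 < 2" for k
  proof -
    have "\<gamma>gd k + (norm (\<phi>d k))\<^sup>2 > 0"
      using dt_gg_pos[of k] by (simp add: add_pos_nonneg)
    with dt_gg_pos[of k] show ?thesis
      by (simp add: c_def field_simps)
  qed
  then show "\<exists>c r. r > 0 \<and> (\<forall>k. norm (Thd k - \<theta>) \<le> c * exp (- r * real k))"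
    using dt_estimator_exp_convergence[of c \<phi>d Phid thgd \<theta> \<theta>g0 \<gamma> Thd] dt_Phi dt_Phi0 dt_thg dt_thg0
      gamma_pos dt_Th dt_ident
    unfolding c_def by blast
qed

end
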